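(* Let $\Bbbk$ be a unital ring and $n,r$ positive integers. Then $\Phi_{n,r}:\Bbbk W_n\to\operatorname{End}_\Bbbk(\mathbf V^{\otimes r})$ is faithful when $n-1\le r$, and $\Phi_{n,r+1/2}:\Bbbk W_{n-1}\to\operatorname{End}_\Bbbk(\mathbf V^{\otimes r}\otimes\mathbf v_n)$ is faithful when $n-2\le r$.
   Context: $\mathbf V$ is a free $\Bbbk$-module with basis $\mathbf v_1,\dots,\mathbf v_n$. $W_n$ is the symmetric group on $\{1,\dots,n\}$ acting on $\mathbf V^{\otimes r}$ by $w(\mathbf v_{j_1}\otimes\cdots\otimes\mathbf v_{j_r})=\mathbf v_{w(j_1)}\otimes\cdots\otimes\mathbf v_{w(j_r)}$ extended linearly; $\Phi_{n,r}$ is the resulting representation. $W_{n-1}=\{w\in W_n:w(n)=n\}$ preserves $\mathbf V^{\otimes r}\otimes\mathbf v_n\subset\mathbf V^{\otimes(r+1)}$, and $\Phi_{n,r+1/2}$ is the resulting representation. *)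

theory Defs
  imports "HOL-Combinatorics.Permutations"
begin

text \<open>The basis of V^{\<otimes>r} is indexed by words of length r over {1..n}:
  the word [j1,...,jr] stands for v_j1 \<otimes> ... \<otimes> v_jr.
  A vector is a coefficient function on words (zero outside the basis index set).\<close>

definition W :: "nat \<Rightarrow> (nat \<Rightarrow> nat) set" where
  "W n = {w. w permutes {1..n}}"

text \<open>W_{n-1}: permutations in W_n fixing n.\<close>
definition W_fix :: "nat \<Rightarrow> (nat \<Rightarrow> nat) set" where
  "W_fix n = {w. w permutes {1..n} \<and> w n = n}"

definition words :: "nat \<Rightarrow> nat \<Rightarrow> nat list set" where
  "words n r = {J. length J = r \<and> set J \<subseteq> {1..n}}"

text \<open>Basis of V^{\<otimes>r} \<otimes> v_n \<subseteq> V^{\<otimes>(r+1)}.\<close>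
definition half_words :: "nat \<Rightarrow> nat \<Rightarrow> nat list set" where
  "half_words n r = {J @ [n] | J. J \<in> words n r}"

text \<open>Linear extension of w(v_J) = v_{w(J)} to x = \<Sum>_{J\<in>B} x_J v_J.\<close>
definition basis_act :: "(nat \<Rightarrow> nat) \<Rightarrow> nat list set \<Rightarrow> (nat list \<Rightarrow> 'k::ring_1) \<Rightarrow> nat list \<Rightarrow> 'k" where
  "basis_act w B x = (\<lambda>K. \<Sum>J\<in>{J\<in>B. map w J = K}. x J)"

definition Phi :: "(nat \<Rightarrow> nat) set \<Rightarrow> nat list set \<Rightarrow> ((nat \<Rightarrow> nat) \<Rightarrow> 'k::ring_1) \<Rightarrow> (nat list \<Rightarrow> 'k) \<Rightarrow> nat list \<Rightarrow> 'k" where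
  "Phi G B a x = (\<lambda>K. \<Sum>w\<in>G. a w * basis_act w B x K)"

definition faithful :: "'k::ring_1 itself \<Rightarrow> (nat \<Rightarrow> nat) set \<Rightarrow> nat list set \<Rightarrow> bool" where
  "faithful _ G B \<longleftrightarrow>
     (\<forall>a :: (nat \<Rightarrow> nat) \<Rightarrow> 'k. (\<forall>w. w \<notin> G \<longrightarrow> a w = 0) \<longrightarrow>
        (\<forall>x. (\<forall>J. J \<notin> B \<longrightarrow> x J = 0) \<longrightarrow> Phi G B a x = (\<lambda>_. 0)) \<longrightarrow>
        (\<forall>w. a w = 0))"

end

theory Submission
  imports Defs
begin

(* A group algebra acts faithfully on a permutation module as soon as some basis word J0
   has trivial stabiliser: applying a = sum_w a_w w to the basis vector of J0 gives
   sum_w a_w v_{w(J0)}, and the words w(J0) are pairwise distinct, so every a_w vanishes.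
   A permutation of {1..n} is determined by its values on all but one point, so a word
   containing the letters 1, ..., n - 1 works for W_n, and for W_{n-1} a word whose first
   r letters contain 1, ..., n - 2 (the appended letter n covers the remaining point n). *)

lemma bij_inj_eq_if_eq_off_point:
  assumes "bij w" "inj w'" "\<And>z. z \<noteq> k \<Longrightarrow> w z = w' z"
  shows "w = w'"
proof
  fix x
  show "w x = w' x"
  proof (cases "x = k")
    case True
    obtain z where z: "w' k = w z" using assms(1) by (metis bij_pointE)
    have "z = k"
    proof (rule ccontr)
      assume "z \<noteq> k"
      then have "w' z = w' k" using z assms(3) by simp
      with \<open>z \<noteq> k\<close> show False using assms(2) by (simp add: inj_eq)
    qed
    with z True show ?thesis by simp
  qed (use assms(3) in simp)
qed

lemma permutes_eq_if_map_eq: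
  assumes "w permutes S" "w' permutes S" "map w J = map w' J" "S - {k} \<subseteq> set J"
  shows "w = w'"
proof (rule bij_inj_eq_if_eq_off_point[OF permutes_bij[OF assms(1)] permutes_inj[OF assms(2)]])
  fix z assume "z \<noteq> k"
  show "w z = w' z"
  proof (cases "z \<in> S")
    case True
    with \<open>z \<noteq> k\<close> assms(4) have "z \<in> set J" by blast
    with assms(3) show ?thesis by (simp add: map_eq_conv)
  qed (use assms(1,2) permutes_not_in in metis)
qed

lemma basis_act_indicator:
  assumes "inj w" "J\<^sub>0 \<in> B"
  shows "basis_act w B (\<lambda>J. if J = J\<^sub>0 then (1::'k::ring_1) else 0) K
         = (if map w J\<^sub>0 = K then 1 else 0)"
proof (cases "map w J\<^sub>0 = K")
  case True
  then have "{J\<in>B. map w J = K} = {J\<^sub>0}"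
    using assms by (auto simp: inj_map_eq_map)
  with True show ?thesis by (simp add: basis_act_def)
next
  case False
  then show ?thesis unfolding basis_act_def by (simp, intro sum.neutral) auto
qed

lemma Phi_indicator_at_image:
  fixes a :: "(nat \<Rightarrow> nat) \<Rightarrow> 'k::ring_1"
  assumes "finite G" "\<And>w. w \<in> G \<Longrightarrow> inj w" "J\<^sub>0 \<in> B"
    and "inj_on (\<lambda>w. map w J\<^sub>0) G" "w\<^sub>0 \<in> G"
  shows "Phi G B a (\<lambda>J. if J = J\<^sub>0 then 1 else 0) (map w\<^sub>0 J\<^sub>0) = a w\<^sub>0"
proof -
  have "Phi G B a (\<lambda>J. if J = J\<^sub>0 then 1 else 0) (map w\<^sub>0 J\<^sub>0)
        = (\<Sum>w\<in>G. a w * (if map w J\<^sub>0 = map w\<^sub>0 J\<^sub>0 then 1 else 0))"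
    unfolding Phi_def using assms(2,3) by (simp add: basis_act_indicator)
  also have "\<dots> = (\<Sum>w\<in>G. if w = w\<^sub>0 then a w else 0)"
    using assms(4,5) by (intro sum.cong) (auto dest: inj_onD)
  also have "\<dots> = a w\<^sub>0"
    using assms(1,5) by simp
  finally show ?thesis .
qed

lemma faithful_if_inj_on_word:
  assumes "finite G" "\<And>w. w \<in> G \<Longrightarrow> inj w" "J\<^sub>0 \<in> B"
    and "inj_on (\<lambda>w. map w J\<^sub>0) G"
  shows "faithful TYPE('k::ring_1) G B"
  unfolding faithful_def
proof (intro allI impI)
  fix a :: "(nat \<Rightarrow> nat) \<Rightarrow> 'k" and w\<^sub>0
  assume outside: "\<forall>w. w \<notin> G \<longrightarrow> a w = 0"
    and annihilates: "\<forall>x. (\<forall>J. J \<notin> B \<longrightarrow> x J = 0) \<longrightarrow> Phi G B a x = (\<lambda>_. 0)"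
  show "a w\<^sub>0 = 0"
  proof (cases "w\<^sub>0 \<in> G")
    case True
    have "Phi G B a (\<lambda>J. if J = J\<^sub>0 then 1 else 0) = (\<lambda>_. 0)"
      using annihilates assms(3) by auto
    with Phi_indicator_at_image[OF assms True] show ?thesis by metis
  qed (use outside in blast)
qed

lemma finite_W: "finite (W n)"
  unfolding W_def by (rule finite_permutations) simp

lemma finite_W_fix: "finite (W_fix n)"
  by (rule finite_subset[OF _ finite_W]) (auto simp: W_fix_def W_def)

theorem corollary4p13:
  fixes n r :: nat
  assumes "0 < n" and "0 < r"
  shows "(n - 1 \<le> r \<longrightarrow> faithful TYPE('k::ring_1) (W n) (words n r)) \<and>
         (n - 2 \<le> r \<longrightarrow> faithful TYPE('k::ring_1) (W_fix n) (half_words n r))"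
proof (intro conjI impI)
  assume "n - 1 \<le> r"
  define J where "J = [1..<n] @ replicate (r - (n - 1)) (1::nat)"
  have "J \<in> words n r"
    using \<open>n - 1 \<le> r\<close> assms by (auto simp: J_def words_def)
  moreover have "inj_on (\<lambda>w. map w J) (W n)"
    by (rule inj_onI, rule permutes_eq_if_map_eq[where k = n and J = J])
      (auto simp: W_def J_def)
  ultimately show "faithful TYPE('k) (W n) (words n r)"
    by (intro faithful_if_inj_on_word[OF finite_W]) (auto simp: W_def permutes_inj)
next
  assume "n - 2 \<le> r"
  define J where "J = [1..<n-1] @ replicate (r - (n - 2)) (1::nat) @ [n]"
  have "J \<in> half_words n r"
    using \<open>n - 2 \<le> r\<close> assms unfolding half_words_def J_def
    by (intro CollectI exI[of _ "[1..<n-1] @ replicate (r - (n - 2)) 1"]) (auto simp: words_def)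
  moreover have "inj_on (\<lambda>w. map w J) (W_fix n)"
    by (rule inj_onI, rule permutes_eq_if_map_eq[where k = "n - 1" and J = J])
      (auto simp: W_fix_def J_def)
  ultimately show "faithful TYPE('k) (W_fix n) (half_words n r)"
    by (intro faithful_if_inj_on_word[OF finite_W_fix]) (auto simp: W_fix_def permutes_inj)
qed

end
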